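(* Let $S_n$ be the star on $n$ vertices with edge set $E$, let $f=\{i,j\}\notin E$ be a pair of distinct vertices of $S_n$, and let $B=E\cup\{f\}$. Then the eigenvalues of $\mathfrak{D}_2(S_n)[B,B]$ are $-1$ with multiplicity $n-3$, together with the roots of the cubic polynomial $g(x)=x^3-2(n-1)x^2-7(n-2)x-(n-1)$.
   Context: For a tree $T$, let $\mathcal{V}_2$ be the set of 2-element vertex subsets (edges regarded as elements of $\mathcal{V}_2$). The 2-Steiner distance matrix $\mathfrak{D}_2(T)$ is indexed by $\mathcal{V}_2$, with entry in row $\{i,j\}$, column $\{k,l\}$ equal to the minimum number of edges of a connected subtree of $T$ whose vertex set contains $i,j,k,l$. $M[B,B]$ denotes the principal submatrix with rows and columns indexed by $B$. *)

theory Defs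
  imports Main "HOL-Computational_Algebra.Polynomial" "Jordan_Normal_Form.Char_Poly"
begin

definition edge_rel :: "'a set set \<Rightarrow> ('a \<times> 'a) set" where
  "edge_rel F = {(u,v). {u,v} \<in> F}"

definition connected_subgraph :: "'a set \<Rightarrow> 'a set set \<Rightarrow> 'a set \<Rightarrow> 'a set set \<Rightarrow> bool" where
  "connected_subgraph V E W F \<longleftrightarrow> W \<subseteq> V \<and> F \<subseteq> E \<and> (\<forall>e\<in>F. e \<subseteq> W) \<and>
     (\<forall>u\<in>W. \<forall>v\<in>W. (u,v) \<in> (edge_rel F)\<^sup>*)"

definition steiner_dist :: "'a set \<Rightarrow> 'a set set \<Rightarrow> 'a set \<Rightarrow> nat" where
  "steiner_dist V E S = (LEAST k. \<exists>W F. connected_subgraph V E W F \<and> S \<subseteq> W \<and> finite F \<and> card F = k)"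

definition steiner2_entry :: "'a set \<Rightarrow> 'a set set \<Rightarrow> 'a set \<Rightarrow> 'a set \<Rightarrow> nat" where
  "steiner2_entry V E P Q = steiner_dist V E (P \<union> Q)"

definition star_edges :: "nat \<Rightarrow> nat set set" where
  "star_edges n = {{0,k} | k. 0 < k \<and> k < n}"

text \<open>Principal submatrix of D_2 indexed by a set B, listed via an enumeration \<sigma> of B.\<close>
definition steiner2_submatrix :: "nat \<Rightarrow> 'a set \<Rightarrow> 'a set set \<Rightarrow> (nat \<Rightarrow> 'a set) \<Rightarrow> real mat" where
  "steiner2_submatrix m V E \<sigma> = mat m m (\<lambda>(a,b). real (steiner2_entry V E (\<sigma> a) (\<sigma> b)))"

end

theory Submission
  imports Defs
begin

text \<open>
  In a star with centre 0 the Steiner distance of a vertex set \<open>S\<close> with at least two elements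
  is \<open>|S - {0}|\<close>, so the entry of \<open>D = D\<^sub>2(S\<^sub>n)[B,B]\<close> at \<open>(P, Q)\<close> is \<open>|P \<union> Q - {0}|\<close>.
  Off the diagonal it depends only on the classes of \<open>P\<close> and \<open>Q\<close>: the spokes \<open>{0,u}\<close> with
  \<open>u \<notin> f\<close>, the two spokes \<open>{0,i}, {0,j}\<close>, and \<open>f\<close> itself; on the diagonal it is one less.
  Hence \<open>D + I\<close> is a blow-up of a \<open>3 \<times> 3\<close> matrix \<open>w\<close>. Two rows of \<open>xI - D\<close> belonging to the
  same class agree outside their two columns; subtracting them and adding the two columns splits off
  a factor \<open>x + 1\<close> and merges the two indices into one whose column carries the summed weight.
  Collapsing the classes leaves \<open>(x + 1)^(n - 3) det ((x + 1) I - w diag (n - 3, 2, 1))\<close>,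
  and this determinant is the cubic.
\<close>

lemma star_hub_connected_subgraph:
  assumes "S \<subseteq> {0..<n}" "S \<noteq> {}"
  shows "connected_subgraph {0..<n} (star_edges n) (insert 0 S) ((\<lambda>u. {0, u}) ` (S - {0}))"
    (is "connected_subgraph _ _ _ ?F")
  unfolding connected_subgraph_def
proof (intro conjI ballI)
  show "insert 0 S \<subseteq> {0..<n}" using assms by auto
  show "?F \<subseteq> star_edges n" using assms(1) by (force simp: star_edges_def)
  show "e \<subseteq> insert 0 S" if "e \<in> ?F" for e using that by auto
  have hub: "(w, 0) \<in> (edge_rel ?F)\<^sup>* \<and> (0, w) \<in> (edge_rel ?F)\<^sup>*"
    if "w \<in> insert 0 S" for w
  proof (cases "w = 0")
    case False
    then have "(w, 0) \<in> edge_rel ?F" "(0, w) \<in> edge_rel ?F"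
      using that by (auto simp: edge_rel_def insert_commute)
    then show ?thesis by blast
  qed simp
  fix u v assume "u \<in> insert 0 S" "v \<in> insert 0 S"
  then show "(u, v) \<in> (edge_rel ?F)\<^sup>*" using hub rtrancl_trans by metis
qed

lemma star_connected_subgraph_spokes:
  assumes c: "connected_subgraph {0..<n} (star_edges n) W F"
    and u: "u \<in> W" "u \<noteq> 0" and v: "v \<in> W" "v \<noteq> u"
  shows "{0, u} \<in> F"
proof -
  have "(u, v) \<in> (edge_rel F)\<^sup>*" using c u v unfolding connected_subgraph_def by blast
  then obtain w where "(u, w) \<in> edge_rel F" using v(2) by (metis converse_rtranclE)
  then have uw: "{u, w} \<in> F" by (simp add: edge_rel_def)
  then have "{u, w} \<in> star_edges n" using c unfolding connected_subgraph_def by blast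
  then have "w = 0" using u(2) by (auto simp: star_edges_def doubleton_eq_iff)
  then show ?thesis using uw by (simp add: insert_commute)
qed

lemma steiner_dist_star:
  assumes S: "S \<subseteq> {0..<n}" and ab: "a \<in> S" "b \<in> S" "a \<noteq> b"
  shows "steiner_dist {0..<n} (star_edges n) S = card (S - {0})"
proof -
  let ?F = "(\<lambda>u. {0, u}) ` (S - {0})"
  have card_F: "card ?F = card (S - {0})"
    by (rule card_image) (auto simp: inj_on_def doubleton_eq_iff)
  show ?thesis
    unfolding steiner_dist_def
  proof (rule Least_equality)
    have "finite ?F" using S finite_subset by blast
    then show "\<exists>W F. connected_subgraph {0..<n} (star_edges n) W F \<and> S \<subseteq> W \<and> finite F \<and>
        card F = card (S - {0})"
      using star_hub_connected_subgraph[OF S] ab card_F by blast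
  next
    fix k assume "\<exists>W F. connected_subgraph {0..<n} (star_edges n) W F \<and> S \<subseteq> W \<and> finite F \<and>
        card F = k"
    then obtain W F where c: "connected_subgraph {0..<n} (star_edges n) W F"
      and SW: "S \<subseteq> W" and F: "finite F" "card F = k" by blast
    have "?F \<subseteq> F"
    proof
      fix e assume "e \<in> ?F"
      then obtain u where u: "u \<in> S" "u \<noteq> 0" and e: "e = {0, u}" by auto
      obtain v where "v \<in> S" "v \<noteq> u" using ab by metis
      then show "e \<in> F" using star_connected_subgraph_spokes[OF c] u e SW by blast
    qed
    then show "card (S - {0}) \<le> k" using card_mono[OF F(1)] card_F F(2) by metis
  qed
qed

lemma steiner2_entry_star:
  assumes "P \<subseteq> {0..<n}" "Q \<subseteq> {0..<n}" "card P = 2"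
  shows "steiner2_entry {0..<n} (star_edges n) P Q = card (P \<union> Q - {0})"
proof -
  obtain a b where "P = {a, b}" "a \<noteq> b" using assms(3) card_2_iff by metis
  then show ?thesis
    unfolding steiner2_entry_def using assms by (intro steiner_dist_star[of _ _ a b]) auto
qed

lemma det_permute_rows_cols:
  fixes A :: "'a :: comm_ring_1 mat"
  assumes A: "A \<in> carrier_mat n n" and p: "p permutes {0..<n}"
  shows "det (mat n n (\<lambda>(i, j). A $$ (p i, p j))) = det A"
proof -
  define B where "B = mat n n (\<lambda>(i, j). A $$ (p i, j))"
  have B: "B \<in> carrier_mat n n" by (simp add: B_def)
  have p_lt: "i < n \<Longrightarrow> p i < n" for i using p by (simp add: permutes_in_image)
  have "mat n n (\<lambda>(i, j). A $$ (p i, p j)) = (mat n n (\<lambda>(i, j). B\<^sup>T $$ (p i, j)))\<^sup>T"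
    by (rule eq_matI) (auto simp: B_def p_lt)
  then have "det (mat n n (\<lambda>(i, j). A $$ (p i, p j))) = det (mat n n (\<lambda>(i, j). B\<^sup>T $$ (p i, j)))"
    by (metis det_transpose mat_carrier)
  also have "\<dots> = signof p * signof p * det A"
    using det_permute_rows[OF _ p, of "B\<^sup>T"] det_permute_rows[OF A p] B
    by (simp add: B_def[symmetric] det_transpose)
  also have "signof p * signof p = (1 :: 'a)" by (cases p rule: sign_cases) auto
  finally show ?thesis by simp
qed

lemma char_poly_permute_rows_cols:
  fixes A :: "'a :: comm_ring_1 mat"
  assumes A: "A \<in> carrier_mat n n" and p: "p permutes {0..<n}"
  shows "char_poly (mat n n (\<lambda>(i, j). A $$ (p i, p j))) = char_poly A"
proof -
  have p_lt: "i < n \<Longrightarrow> p i < n" for i using p by (simp add: permutes_in_image)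
  have p_eq: "i < n \<Longrightarrow> j < n \<Longrightarrow> p i = p j \<longleftrightarrow> i = j" for i j
    using permutes_inj[OF p] by (auto dest: injD)
  have "char_poly_matrix (mat n n (\<lambda>(i, j). A $$ (p i, p j))) =
      mat n n (\<lambda>(i, j). char_poly_matrix A $$ (p i, p j))"
    by (rule eq_matI) (use A in \<open>auto simp: char_poly_matrix_def p_lt p_eq\<close>)
  then show ?thesis
    unfolding char_poly_def using det_permute_rows_cols[OF char_poly_matrix_closed[OF A] p] by simp
qed

lemma char_poly_enumeration_indep:
  fixes f :: "'b \<Rightarrow> 'b \<Rightarrow> 'a :: comm_ring_1"
  assumes \<sigma>: "bij_betw \<sigma> {0..<n} B" and \<rho>: "bij_betw \<rho> {0..<n} B"
  shows "char_poly (mat n n (\<lambda>(a, b). f (\<rho> a) (\<rho> b))) =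
    char_poly (mat n n (\<lambda>(a, b). f (\<sigma> a) (\<sigma> b)))"
proof -
  define p where "p a = (if a < n then inv_into {0..<n} \<sigma> (\<rho> a) else a)" for a
  have "bij_betw (inv_into {0..<n} \<sigma> \<circ> \<rho>) {0..<n} {0..<n}"
    using bij_betw_trans[OF \<rho> bij_betw_inv_into[OF \<sigma>]] .
  then have "bij_betw p {0..<n} {0..<n}"
    by (rule bij_betw_cong[THEN iffD1, rotated]) (simp add: p_def)
  then have p: "p permutes {0..<n}" by (rule bij_imp_permutes) (simp add: p_def)
  have \<sigma>p: "a < n \<Longrightarrow> \<sigma> (p a) = \<rho> a" for a
    using bij_betw_inv_into_right[OF \<sigma>] \<rho> by (auto simp: p_def bij_betw_def)
  have p_lt: "a < n \<Longrightarrow> p a < n" for a using p by (simp add: permutes_in_image)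
  have "mat n n (\<lambda>(a, b). f (\<rho> a) (\<rho> b)) =
      mat n n (\<lambda>(a, b). mat n n (\<lambda>(a, b). f (\<sigma> a) (\<sigma> b)) $$ (p a, p b))"
    by (rule eq_matI) (auto simp: \<sigma>p p_lt)
  then show ?thesis using char_poly_permute_rows_cols[OF mat_carrier p] by simp
qed

lemma det_merge_twin_rows:
  fixes A :: "'a :: comm_ring_1 mat"
  assumes A: "A \<in> carrier_mat (Suc n) (Suc n)" and p: "p < n"
    and twins: "\<And>b. b < Suc n \<Longrightarrow> b \<noteq> p \<Longrightarrow> b \<noteq> Suc p \<Longrightarrow> A $$ (p, b) = A $$ (Suc p, b)"
    and d1: "A $$ (p, p) - A $$ (Suc p, p) = d" and d2: "A $$ (Suc p, Suc p) - A $$ (p, Suc p) = d"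
  shows "det A = d * det (mat n n (\<lambda>(a, b). A $$ (insert_index p a, insert_index p b)
    + (if b = p then A $$ (insert_index p a, p) else 0)))" (is "_ = _ * det ?M")
proof -
  define A1 where "A1 = addrow (-1) p (Suc p) A"
  define A2 where "A2 = addcol 1 (Suc p) p A1"
  have A1: "A1 \<in> carrier_mat (Suc n) (Suc n)" using A by (simp add: A1_def)
  have A2: "A2 \<in> carrier_mat (Suc n) (Suc n)" using A1 by (simp add: A2_def mat_addcol_def)
  have "det A2 = det A"
    using det_addrow[OF _ _ A, where a = "-1" and k = p and l = "Suc p"]
      det_addcol[OF _ _ A1, where a = 1 and k = "Suc p" and l = p] p
    by (simp add: A1_def A2_def)
  have A2_entry: "A2 $$ (a, b) = A1 $$ (a, b) + (if b = Suc p then A1 $$ (a, p) else 0)"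
    and A1_entry: "A1 $$ (a, b) = A $$ (a, b) - (if a = p then A $$ (Suc p, b) else 0)"
    if "a < Suc n" "b < Suc n" for a b
    using that A A1 p by (auto simp: A1_def A2_def)
  have row_p: "A2 $$ (p, b) = (if b = p then d else 0)" if "b < Suc n" for b
    using that p twins[of b] d1 d2 by (auto simp: A2_entry A1_entry algebra_simps)
  have "det A2 = (\<Sum>b<Suc n. A2 $$ (p, b) * cofactor A2 p b)"
    by (rule laplace_expansion_row[OF A2]) (use p in simp)
  also have "\<dots> = (\<Sum>b<Suc n. if b = p then d * cofactor A2 p b else 0)"
    by (rule sum.cong) (auto simp: row_p)
  also have "\<dots> = d * det (mat_delete A2 p p)"
    using p by (simp add: cofactor_def mult_2[symmetric] power_mult)
  also have "mat_delete A2 p p = ?M"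
  proof (rule eq_matI)
    fix a b assume "a < dim_row ?M" "b < dim_col ?M"
    moreover have "insert_index p a < Suc n" "insert_index p a \<noteq> p" "insert_index p b < Suc n"
      using calculation by (auto simp: insert_index_def)
    ultimately show "mat_delete A2 p p $$ (a, b) = ?M $$ (a, b)"
      using A2 by (auto simp: mat_delete_def A2_entry A1_entry insert_index_def)
  qed (use A2 in \<open>auto simp: mat_delete_def\<close>)
  finally show ?thesis using \<open>det A2 = det A\<close> by simp
qed

lemma det2:
  fixes A :: "'a :: comm_ring_1 mat"
  assumes A: "A \<in> carrier_mat 2 2"
  shows "det A = A $$ (0, 0) * A $$ (1, 1) - A $$ (0, 1) * A $$ (1, 0)"
proof -
  have "det A = (\<Sum>j<2. A $$ (0, j) * cofactor A 0 j)"
    by (rule laplace_expansion_row[OF A]) simp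
  also have "\<dots> = A $$ (0, 0) * A $$ (1, 1) - A $$ (0, 1) * A $$ (1, 0)"
    using A by (simp add: numeral_2_eq_2 cofactor_def det_single mat_delete_def)
  finally show ?thesis .
qed

lemma det3:
  fixes A :: "'a :: comm_ring_1 mat"
  assumes A: "A \<in> carrier_mat 3 3"
  shows "det A = A $$ (0, 0) * (A $$ (1, 1) * A $$ (2, 2) - A $$ (1, 2) * A $$ (2, 1))
    - A $$ (0, 1) * (A $$ (1, 0) * A $$ (2, 2) - A $$ (1, 2) * A $$ (2, 0))
    + A $$ (0, 2) * (A $$ (1, 0) * A $$ (2, 1) - A $$ (1, 1) * A $$ (2, 0))"
proof -
  have "det A = (\<Sum>j<3. A $$ (0, j) * cofactor A 0 j)"
    by (rule laplace_expansion_row[OF A]) simp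
  also have "\<dots> = A $$ (0, 0) * cofactor A 0 0 + A $$ (0, 1) * cofactor A 0 1 + A $$ (0, 2) * cofactor A 0 2"
    by (simp add: numeral_3_eq_3 numeral_2_eq_2)
  also have "cofactor A 0 0 = A $$ (1, 1) * A $$ (2, 2) - A $$ (1, 2) * A $$ (2, 1)"
    unfolding cofactor_def using A by (subst det2) (auto simp: mat_delete_def numeral_2_eq_2)
  also have "cofactor A 0 1 = - (A $$ (1, 0) * A $$ (2, 2) - A $$ (1, 2) * A $$ (2, 0))"
    unfolding cofactor_def using A by (subst det2) (auto simp: mat_delete_def numeral_2_eq_2)
  also have "cofactor A 0 2 = A $$ (1, 0) * A $$ (2, 1) - A $$ (1, 1) * A $$ (2, 0)"
    unfolding cofactor_def using A by (subst det2) (auto simp: mat_delete_def numeral_2_eq_2)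
  finally show ?thesis by (simp add: algebra_simps)
qed

text \<open>\<open>\<mu> I - W diag s\<close> for a matrix \<open>W\<close> that is constant on class blocks; the weight \<open>s b\<close>
  counts the original indices merged into column \<open>b\<close>.\<close>

definition class_charmat ::
    "'a :: comm_ring_1 \<Rightarrow> (nat \<Rightarrow> nat \<Rightarrow> 'a) \<Rightarrow> (nat \<Rightarrow> nat) \<Rightarrow> (nat \<Rightarrow> 'a) \<Rightarrow> nat \<Rightarrow> 'a mat" where
  "class_charmat \<mu> w cls s n = mat n n (\<lambda>(a, b). (if a = b then \<mu> else 0) - s b * w (cls a) (cls b))"

lemma det_class_charmat_merge:
  assumes p: "p < n" and same_class: "cls p = cls (Suc p)"
  shows "det (class_charmat \<mu> w cls s (Suc n)) = \<mu> * det (class_charmat \<mu> w (cls \<circ> insert_index p)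
    (s(Suc p := s p + s (Suc p)) \<circ> insert_index p) n)"
proof -
  let ?C = "class_charmat \<mu> w cls s (Suc n)"
  have "det ?C = \<mu> * det (mat n n (\<lambda>(a, b). ?C $$ (insert_index p a, insert_index p b)
      + (if b = p then ?C $$ (insert_index p a, p) else 0)))"
    by (rule det_merge_twin_rows) (use p same_class in \<open>auto simp: class_charmat_def\<close>)
  also have "mat n n (\<lambda>(a, b). ?C $$ (insert_index p a, insert_index p b)
      + (if b = p then ?C $$ (insert_index p a, p) else 0)) = class_charmat \<mu> w (cls \<circ> insert_index p)
      (s(Suc p := s p + s (Suc p)) \<circ> insert_index p) n"
    by (rule eq_matI) (use p same_class in \<open>auto simp: class_charmat_def insert_index_def algebra_simps\<close>)
  finally show ?thesis .
qed

text \<open>Positions \<open>0..<k\<close> hold the spokes \<open>{0,u}\<close> with \<open>u \<notin> {i,j}\<close>, positions \<open>k\<close> and \<open>k + 1\<close>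
  the spokes \<open>{0,i}\<close> and \<open>{0,j}\<close>, and position \<open>k + 2\<close> the pair \<open>{i,j}\<close> (see \<open>star_pair_enum\<close>).\<close>

definition star_pair_class :: "nat \<Rightarrow> nat \<Rightarrow> nat" where
  "star_pair_class k a = (if a < k then 0 else if a < k + 2 then 1 else 2)"

lemma det_class_charmat_collapse_spokes:
  assumes "1 \<le> k"
  shows "det (class_charmat \<mu> w (star_pair_class k) ((\<lambda>_. 1)(0 := t)) (k + 3)) =
    \<mu> ^ (k - 1) * det (class_charmat \<mu> w (star_pair_class 1) ((\<lambda>_. 1)(0 := t + of_nat (k - 1))) 4)"
  using assms
proof (induction k arbitrary: t rule: nat_induct_at_least)
  case base
  then show ?case by simp
next
  case (Suc k)
  then obtain k' where k': "k = Suc k'" by (cases k) auto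
  have classes: "star_pair_class (Suc k) \<circ> insert_index 0 = star_pair_class k"
    by (auto simp: star_pair_class_def)
  have weights: "((\<lambda>_. 1)(0 := t))(Suc 0 := t + 1) \<circ> insert_index 0 = (\<lambda>_. 1)(0 := t + 1)"
    by (auto simp: insert_index_def)
  have "det (class_charmat \<mu> w (star_pair_class (Suc k)) ((\<lambda>_. 1)(0 := t)) (Suc k + 3)) =
      \<mu> * det (class_charmat \<mu> w (star_pair_class k) ((\<lambda>_. 1)(0 := t + 1)) (k + 3))"
    using det_class_charmat_merge[of 0 "k + 3" "star_pair_class (Suc k)" \<mu> w "(\<lambda>_. 1)(0 := t)"]
      Suc.hyps by (simp add: classes weights star_pair_class_def)
  also have "\<dots> = \<mu> * (\<mu> ^ k' * det (class_charmat \<mu> w (star_pair_class 1)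
      ((\<lambda>_. 1)(0 := t + 1 + of_nat k')) 4))"
    using Suc.IH[of "t + 1"] by (simp only: k' diff_Suc_1)
  also have "\<dots> = \<mu> ^ (Suc k - 1) * det (class_charmat \<mu> w (star_pair_class 1)
      ((\<lambda>_. 1)(0 := t + of_nat (Suc k - 1))) 4)"
    by (simp only: k' diff_Suc_1 power_Suc mult.assoc of_nat_Suc add.assoc)
  finally show ?case .
qed

lemma class_charmat_cong:
  assumes "\<And>a. a < n \<Longrightarrow> cls a = cls' a" and "\<And>a. a < n \<Longrightarrow> s a = s' a"
  shows "class_charmat \<mu> w cls s n = class_charmat \<mu> w cls' s' n"
  using assms by (auto simp: class_charmat_def intro!: eq_matI)

lemma det_star_class_charmat:
  "det (class_charmat \<mu> w (star_pair_class k) (\<lambda>_. 1) (k + 3)) =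
    \<mu> ^ k * det (class_charmat \<mu> w id ((\<lambda>_. 1)(0 := of_nat k, 1 := 2)) 3)"
proof (cases k)
  case 0
  have "det (class_charmat \<mu> w (star_pair_class 0) (\<lambda>_. 1) (Suc 2)) =
      \<mu> * det (class_charmat \<mu> w (star_pair_class 0 \<circ> insert_index 0)
        ((\<lambda>_. 1)(Suc 0 := 2) \<circ> insert_index 0) 2)"
    using det_class_charmat_merge[of 0 2 "star_pair_class 0" \<mu> w "\<lambda>_. 1"]
    by (simp add: star_pair_class_def)
  then show ?thesis
    using 0 by (simp add: det2 det3 class_charmat_def star_pair_class_def insert_index_def)
next
  case (Suc k')
  have "det (class_charmat \<mu> w (star_pair_class k) (\<lambda>_. 1) (k + 3)) =
      \<mu> ^ k' * det (class_charmat \<mu> w (star_pair_class 1) ((\<lambda>_. 1)(0 := of_nat k)) (Suc 3))"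
    using det_class_charmat_collapse_spokes[of k \<mu> w 1] Suc by (simp add: fun_upd_idem)
  also have "det (class_charmat \<mu> w (star_pair_class 1) ((\<lambda>_. 1)(0 := of_nat k)) (Suc 3)) =
      \<mu> * det (class_charmat \<mu> w (star_pair_class 1 \<circ> insert_index 1)
        ((\<lambda>_. 1)(0 := of_nat k, Suc 1 := 1 + 1) \<circ> insert_index 1) 3)"
    using det_class_charmat_merge[of 1 3 "star_pair_class 1" \<mu> w "(\<lambda>_. 1)(0 := of_nat k)"]
    by (simp add: star_pair_class_def)
  also have "class_charmat \<mu> w (star_pair_class 1 \<circ> insert_index 1)
        ((\<lambda>_. 1)(0 := of_nat k, Suc 1 := 1 + 1) \<circ> insert_index 1) 3 =
      class_charmat \<mu> w id ((\<lambda>_. 1)(0 := of_nat k, 1 := 2)) 3"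
    by (rule class_charmat_cong) (auto simp: star_pair_class_def insert_index_def less_Suc_eq numeral_eq_Suc)
  finally show ?thesis using Suc by simp
qed

text \<open>The entries of \<open>D + I\<close>, indexed by the classes of \<open>star_pair_class\<close>.\<close>

definition star_class_entry :: "nat \<Rightarrow> nat \<Rightarrow> real" where
  "star_class_entry c d = (if (c = 2 \<and> d \<noteq> 1) \<or> (d = 2 \<and> c \<noteq> 1) then 3 else 2)"

definition star_pair_enum :: "(nat \<Rightarrow> nat) \<Rightarrow> nat \<Rightarrow> nat \<Rightarrow> nat \<Rightarrow> nat \<Rightarrow> nat set" where
  "star_pair_enum leaf i j k a =
    (if a < k then {0, leaf a} else if a = k then {0, i} else if a = Suc k then {0, j} else {i, j})"

lemma star_pair_enum_bij:
  assumes ij: "i < n" "j < n" "i \<noteq> j" "i \<noteq> 0" "j \<noteq> 0"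
    and leaf: "bij_betw leaf {0..<n - 3} ({1..<n} - {i, j})"
  shows "bij_betw (star_pair_enum leaf i j (n - 3)) {0..<n} (star_edges n \<union> {{i, j}})"
proof -
  let ?k = "n - 3" and ?L = "{1..<n} - {i, j}" and ?\<rho> = "star_pair_enum leaf i j (n - 3)"
  have n: "n = ?k + 3" using ij by linarith
  have "bij_betw ((\<lambda>u. {0, u}) \<circ> leaf) {0..<?k} ((\<lambda>u. {0, u}) ` ?L)"
    by (rule bij_betw_trans[OF leaf]) (auto simp: bij_betw_def inj_on_def doubleton_eq_iff)
  then have spokes: "bij_betw ?\<rho> {0..<?k} ((\<lambda>u. {0, u}) ` ?L)"
    by (rule bij_betw_cong[THEN iffD1, rotated]) (simp add: star_pair_enum_def)
  have special: "bij_betw ?\<rho> {?k, Suc ?k, Suc (Suc ?k)} {{0, i}, {0, j}, {i, j}}"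
    using ij by (auto simp: bij_betw_def inj_on_def star_pair_enum_def doubleton_eq_iff)
  have "bij_betw ?\<rho> ({0..<?k} \<union> {?k, Suc ?k, Suc (Suc ?k)})
      ((\<lambda>u. {0, u}) ` ?L \<union> {{0, i}, {0, j}, {i, j}})"
    by (rule bij_betw_combine[OF spokes special]) (use ij in \<open>auto simp: doubleton_eq_iff\<close>)
  moreover have "{0..<?k} \<union> {?k, Suc ?k, Suc (Suc ?k)} = {0..<n}" using n by auto
  moreover have "(\<lambda>u. {0, u}) ` ?L \<union> {{0, i}, {0, j}, {i, j}} = star_edges n \<union> {{i, j}}"
    using ij by (auto simp: star_edges_def)
  ultimately show ?thesis by simp
qed

lemma steiner2_entry_star_pair_enum:
  assumes ij: "i < n" "j < n" "i \<noteq> j" "i \<noteq> 0" "j \<noteq> 0"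
    and leaf: "bij_betw leaf {0..<n - 3} ({1..<n} - {i, j})" and ab: "a < n" "b < n"
  shows "real (steiner2_entry {0..<n} (star_edges n)
      (star_pair_enum leaf i j (n - 3) a) (star_pair_enum leaf i j (n - 3) b)) =
    star_class_entry (star_pair_class (n - 3) a) (star_pair_class (n - 3) b) - (if a = b then 1 else 0)"
proof -
  let ?k = "n - 3" and ?\<rho> = "star_pair_enum leaf i j (n - 3)"
  have leaf_in: "c < ?k \<Longrightarrow> leaf c \<in> {1..<n} - {i, j}" for c
    using bij_betwE[OF leaf] by simp
  have leaf_eq: "c < ?k \<Longrightarrow> d < ?k \<Longrightarrow> leaf c = leaf d \<longleftrightarrow> c = d" for c d
    using leaf by (auto simp: bij_betw_def dest: inj_onD)
  have "?\<rho> c \<subseteq> {0..<n} \<and> card (?\<rho> c) = 2" if "c < n" for c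
    using ij leaf_in[of c] by (auto simp: star_pair_enum_def)
  then have "steiner2_entry {0..<n} (star_edges n) (?\<rho> a) (?\<rho> b) = card (?\<rho> a \<union> ?\<rho> b - {0})"
    using ab by (intro steiner2_entry_star) auto
  also have "?\<rho> a \<union> ?\<rho> b - {0} = (?\<rho> a - {0}) \<union> (?\<rho> b - {0})" by blast
  finally have entry: "steiner2_entry {0..<n} (star_edges n) (?\<rho> a) (?\<rho> b) =
      card ((?\<rho> a - {0}) \<union> (?\<rho> b - {0}))" .
  have class_cases: "(c < ?k \<and> ?\<rho> c - {0} = {leaf c}) \<or> (c = ?k \<and> ?\<rho> c - {0} = {i}) \<or>
      (c = Suc ?k \<and> ?\<rho> c - {0} = {j}) \<or> (c = Suc (Suc ?k) \<and> ?\<rho> c - {0} = {i, j})"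
    if "c < n" for c
    using that ij leaf_in[of c] by (auto simp: star_pair_enum_def)
  have "real (card ((?\<rho> a - {0}) \<union> (?\<rho> b - {0}))) =
      star_class_entry (star_pair_class ?k a) (star_pair_class ?k b) - (if a = b then 1 else 0)"
    using class_cases[OF ab(1)] class_cases[OF ab(2)]
  proof (elim disjE conjE)
  qed (use ij leaf_in[of a] leaf_in[of b] leaf_eq[of b a] in
      \<open>simp_all add: star_pair_class_def star_class_entry_def card_insert_if\<close>)
  then show ?thesis unfolding entry .
qed

lemma poly_char_poly_class_mat:
  fixes w :: "nat \<Rightarrow> nat \<Rightarrow> 'a :: comm_ring_1"
  shows "poly (char_poly (mat n n (\<lambda>(a, b). w (cls a) (cls b) - (if a = b then 1 else 0)))) x =
    det (class_charmat (x + 1) w cls (\<lambda>_. 1) n)"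
  unfolding char_poly_def
  by (rule poly_det_cong[of _ n]) (auto simp: char_poly_matrix_def class_charmat_def)

lemma det_star_class_quotient:
  "det (class_charmat (x + 1) star_class_entry id ((\<lambda>_. 1)(0 := real n - 3, 1 := 2)) 3) =
    poly [:- (real n - 1), - 7 * (real n - 2), - 2 * (real n - 1), 1:] x"
  by (simp add: det3 class_charmat_def star_class_entry_def) (simp add: algebra_simps power2_eq_square power3_eq_cube)

lemma poly_char_poly_steiner2_star_pair:
  assumes ij: "i < n" "j < n" "i \<noteq> j" "i \<noteq> 0" "j \<noteq> 0"
    and \<sigma>: "bij_betw \<sigma> {0..<n} (star_edges n \<union> {{i, j}})"
  shows "poly (char_poly (steiner2_submatrix n {0..<n} (star_edges n) \<sigma>)) x =
    det (class_charmat (x + 1) star_class_entry (star_pair_class (n - 3)) (\<lambda>_. 1) n)"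
proof -
  have "card ({1..<n} - {i, j}) = n - 3" using ij by (simp add: card_Diff_subset)
  then obtain leaf where leaf: "bij_betw leaf {0..<n - 3} ({1..<n} - {i, j})"
    by (metis card_atLeastLessThan diff_zero finite_atLeastLessThan finite_Diff finite_same_card_bij)
  let ?\<rho> = "star_pair_enum leaf i j (n - 3)" and ?cls = "star_pair_class (n - 3)"
  have "char_poly (steiner2_submatrix n {0..<n} (star_edges n) \<sigma>) =
      char_poly (steiner2_submatrix n {0..<n} (star_edges n) ?\<rho>)"
    unfolding steiner2_submatrix_def
    by (rule char_poly_enumeration_indep[OF star_pair_enum_bij[OF ij leaf] \<sigma>,
          where f = "\<lambda>P Q. real (steiner2_entry {0..<n} (star_edges n) P Q)"])
  also have "steiner2_submatrix n {0..<n} (star_edges n) ?\<rho> =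
      mat n n (\<lambda>(a, b). star_class_entry (?cls a) (?cls b) - (if a = b then 1 else 0))"
    unfolding steiner2_submatrix_def
    by (rule eq_matI) (simp_all add: steiner2_entry_star_pair_enum[OF ij leaf])
  finally show ?thesis by (simp add: poly_char_poly_class_mat)
qed

theorem theorem5p3:
  fixes n i j :: nat and \<sigma> :: "nat \<Rightarrow> nat set"
  assumes "i < n" and "j < n" and "i \<noteq> j" and "{i, j} \<notin> star_edges n"
    and "bij_betw \<sigma> {0..<n} (star_edges n \<union> {{i, j}})"
  shows "char_poly (steiner2_submatrix n {0..<n} (star_edges n) \<sigma>) =
    [:1, 1:] ^ (n - 3) *
    [:- (real n - 1), - 7 * (real n - 2), - 2 * (real n - 1), 1:]"
proof -
  have ij: "i < n" "j < n" "i \<noteq> j" "i \<noteq> 0" "j \<noteq> 0"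
    using assms(1-4) by (auto simp: star_edges_def)
  then have n: "n = (n - 3) + 3" by linarith
  have "poly (char_poly (steiner2_submatrix n {0..<n} (star_edges n) \<sigma>)) x =
      (x + 1) ^ (n - 3) *
      det (class_charmat (x + 1) star_class_entry id ((\<lambda>_. 1)(0 := real n - 3, 1 := 2)) 3)" for x
    using poly_char_poly_steiner2_star_pair[OF ij assms(5)]
      det_star_class_charmat[of "x + 1" star_class_entry "n - 3"] n
    by (simp add: of_nat_diff)
  then have "poly (char_poly (steiner2_submatrix n {0..<n} (star_edges n) \<sigma>)) =
      poly ([:1, 1:] ^ (n - 3) * [:- (real n - 1), - 7 * (real n - 2), - 2 * (real n - 1), 1:])"
    by (simp only: det_star_class_quotient fun_eq_iff poly_mult poly_power) (simp add: add.commute)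
  then show ?thesis by (simp only: poly_eq_poly_eq_iff)
qed

end
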